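(* Let $S=S(\lambda_1,\ldots,\lambda_d)$ be a spider with $d\ge 2$ legs, and let $S'$ be the spider with $d-1$ legs obtained from $S$ by replacing two legs, of lengths $\lambda_i$ and $\lambda_j$ ($i\neq j$), by a single leg of length $\lambda_i+\lambda_j$ (so $S$ and $S'$ have the same number of vertices). If $S$ has a connected partition of type $\mu$, then $S'$ also has a connected partition of type $\mu$.
   Context: A spider $S(\lambda_1,\ldots,\lambda_d)$, for positive integers $\lambda_1,\ldots,\lambda_d$, is the tree consisting of a vertex $v$ (the center) together with $d$ vertex-disjoint paths (legs) having $\lambda_1,\ldots,\lambda_d$ vertices respectively, where $v$ is joined by an edge to one endpoint of each leg. A connected partition of a graph $G=(V,E)$ is a partition of $V$ into blocks each inducing a connected subgraph; its type is the integer partition of $|V|$ formed by the block sizes in decreasing order. *)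

theory Defs
  imports Main "HOL-Library.Multiset" "HOL-Library.Disjoint_Sets"
begin

(* A graph is given by a vertex set V and a symmetric adjacency predicate. *)

definition induces_connected :: "('a \<Rightarrow> 'a \<Rightarrow> bool) \<Rightarrow> 'a set \<Rightarrow> bool" where
  "induces_connected adj B \<longleftrightarrow> B \<noteq> {} \<and>
     (\<forall>x\<in>B. \<forall>y\<in>B. (\<lambda>u v. adj u v \<and> u \<in> B \<and> v \<in> B)\<^sup>*\<^sup>* x y)"

definition connected_partition :: "'a set \<Rightarrow> ('a \<Rightarrow> 'a \<Rightarrow> bool) \<Rightarrow> 'a set set \<Rightarrow> bool" where
  "connected_partition V adj P \<longleftrightarrow> partition_on V P \<and> (\<forall>B\<in>P. induces_connected adj B)"

(* type of a partition: the multiset of block sizes (an integer partition of |V|;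
   listing it in decreasing order is just a presentation of this multiset) *)
definition partition_type :: "'a set set \<Rightarrow> nat multiset" where
  "partition_type P = image_mset card (mset_set P)"

definition has_connected_partition_of_type ::
  "'a set \<Rightarrow> ('a \<Rightarrow> 'a \<Rightarrow> bool) \<Rightarrow> nat multiset \<Rightarrow> bool" where
  "has_connected_partition_of_type V adj \<mu> \<longleftrightarrow>
     (\<exists>P. connected_partition V adj P \<and> partition_type P = \<mu>)"

(* Spider S(lams!0, ..., lams!(d-1)): center (0,0); the t-th vertex (1 <= t <= lams!k)
   of leg k is (Suc k, t); the center is joined to (Suc k, 1). *)
definition spider_vertices :: "nat list \<Rightarrow> (nat \<times> nat) set" where
  "spider_vertices lams = {(0,0)} \<union> {(Suc k, t) | k t. k < length lams \<and> 1 \<le> t \<and> t \<le> lams ! k}"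

definition spider_adj :: "nat list \<Rightarrow> nat \<times> nat \<Rightarrow> nat \<times> nat \<Rightarrow> bool" where
  "spider_adj lams u v \<longleftrightarrow> u \<in> spider_vertices lams \<and> v \<in> spider_vertices lams \<and>
     ((u = (0,0) \<and> snd v = 1) \<or> (v = (0,0) \<and> snd u = 1) \<or>
      (fst u = fst v \<and> fst u \<noteq> 0 \<and> (snd v = Suc (snd u) \<or> snd u = Suc (snd v))))"

definition merge_legs :: "nat list \<Rightarrow> nat \<Rightarrow> nat \<Rightarrow> nat list" where
  "merge_legs lams i j =
     [lams ! k. k \<leftarrow> [0..<length lams], k \<noteq> i \<and> k \<noteq> j] @ [lams ! i + lams ! j]"

end

theory Submission
  imports Defs
begin

text \<open>In a connected partition of a spider the block \<open>B0\<close> of the centre contains an initial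
  segment of every leg, say of lengths \<open>a\<close> and \<open>b\<close> on legs \<open>i\<close> and \<open>j\<close>, and every other block is
  a stretch of consecutive vertices of a single leg. Lay out the merged leg as the first \<open>a\<close>
  vertices of leg \<open>i\<close>, the first \<open>b\<close> vertices of leg \<open>j\<close>, the rest of leg \<open>i\<close> and the rest of
  leg \<open>j\<close>. This bijection of vertex sets maps every edge inside a block to an edge, except the two edges
  leaving \<open>B0\<close> at the ends of the segments, which lie in no block, and the edge from the centre
  to leg \<open>j\<close>, which becomes a path through the image of \<open>B0\<close>. Hence the images of the blocks
  form a connected partition of the merged spider with the same block sizes.\<close>

lemma partition_on_block_eq:
  assumes "partition_on A P" "B \<in> P" "C \<in> P" "x \<in> B" "x \<in> C"
  shows "B = C"
  using disjointD[OF partition_onD2[OF assms(1)] assms(2,3)] assms(4,5) by blast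

lemma induces_connected_image:
  assumes conn: "induces_connected adj B"
    and edge: "\<And>u v. adj u v \<Longrightarrow> u \<in> B \<Longrightarrow> v \<in> B \<Longrightarrow>
                 (\<lambda>x y. adj' x y \<and> x \<in> f ` B \<and> y \<in> f ` B)\<^sup>*\<^sup>* (f u) (f v)"
  shows "induces_connected adj' (f ` B)"
  unfolding induces_connected_def
proof (intro conjI ballI)
  show "f ` B \<noteq> {}" using conn by (simp add: induces_connected_def)
  fix x y assume "x \<in> f ` B" "y \<in> f ` B"
  then obtain u v where uv: "u \<in> B" "v \<in> B" and xy: "x = f u" "y = f v" by blast
  have "(\<lambda>x y. adj x y \<and> x \<in> B \<and> y \<in> B)\<^sup>*\<^sup>* u v"
    using conn uv by (simp add: induces_connected_def)
  then have "(\<lambda>x y. adj' x y \<and> x \<in> f ` B \<and> y \<in> f ` B)\<^sup>*\<^sup>* (f u) (f v)"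
    by (induction rule: rtranclp_induct) (auto intro: rtranclp_trans edge)
  then show "(\<lambda>x y. adj' x y \<and> x \<in> f ` B \<and> y \<in> f ` B)\<^sup>*\<^sup>* x y" using xy by simp
qed

lemma partition_type_inj_image:
  assumes "inj_on f (\<Union>P)"
  shows "partition_type ((`) f ` P) = partition_type P"
proof -
  have "inj_on ((`) f) P"
    by (rule inj_onI) (metis Sup_upper assms inj_on_image_eq_iff)
  then have "partition_type ((`) f ` P) = image_mset (\<lambda>B. card (f ` B)) (mset_set P)"
    by (simp add: partition_type_def image_mset_mset_set[symmetric] multiset.map_comp comp_def)
  also have "\<dots> = partition_type P"
    unfolding partition_type_def
  proof (rule image_mset_cong)
    fix B assume "B \<in># mset_set P"
    then have "B \<in> P" by (cases "finite P") auto
    then show "card (f ` B) = card B"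
      by (meson Sup_upper assms card_image inj_on_subset)
  qed
  finally show ?thesis .
qed

lemma connected_partition_bij_image:
  assumes P: "connected_partition V adj P" and f: "bij_betw f V V'"
    and edge: "\<And>B u v. B \<in> P \<Longrightarrow> adj u v \<Longrightarrow> u \<in> B \<Longrightarrow> v \<in> B \<Longrightarrow>
                 (\<lambda>x y. adj' x y \<and> x \<in> f ` B \<and> y \<in> f ` B)\<^sup>*\<^sup>* (f u) (f v)"
  shows "connected_partition V' adj' ((`) f ` P)"
    and "partition_type ((`) f ` P) = partition_type P"
proof -
  have part: "partition_on V P" and conn: "\<And>B. B \<in> P \<Longrightarrow> induces_connected adj B"
    using P by (auto simp: connected_partition_def)
  have inj: "inj_on f (\<Union>P)"
    using f partition_onD1[OF part] by (simp add: bij_betw_def)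
  have "(`) f ` P - {{}} = (`) f ` P"
    using partition_onD3[OF part] by auto
  then have "partition_on V' ((`) f ` P)"
    using partition_on_inj_image[OF part, of f] f by (simp add: bij_betw_def)
  moreover have "induces_connected adj' (f ` B)" if "B \<in> P" for B
    using induces_connected_image[OF conn edge] that by blast
  ultimately show "connected_partition V' adj' ((`) f ` P)"
    by (auto simp: connected_partition_def)
  show "partition_type ((`) f ` P) = partition_type P"
    using partition_type_inj_image[OF inj] .
qed

lemma spider_vertices_center [simp]: "(0, t) \<in> spider_vertices lams \<longleftrightarrow> t = 0"
  by (auto simp: spider_vertices_def)

lemma spider_vertices_leg [simp]:
  "(Suc k, t) \<in> spider_vertices lams \<longleftrightarrow> k < length lams \<and> 1 \<le> t \<and> t \<le> lams ! k"
  by (auto simp: spider_vertices_def)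

lemma spider_adj_sym: "spider_adj lams u v \<Longrightarrow> spider_adj lams v u"
  by (auto simp: spider_adj_def)

lemma spider_adj_center_leg:
  "k < length lams \<Longrightarrow> 1 \<le> lams ! k \<Longrightarrow> spider_adj lams (0, 0) (Suc k, 1)"
  by (auto simp: spider_adj_def)

lemma spider_adj_along_leg:
  "k < length lams \<Longrightarrow> 1 \<le> t \<Longrightarrow> t < lams ! k \<Longrightarrow> spider_adj lams (Suc k, t) (Suc k, Suc t)"
  by (auto simp: spider_adj_def)

lemma spider_adj_symp_cases [consumes 2, case_names center_leg along_leg]:
  assumes "spider_adj lams u v" "symp Q"
    and center_leg: "\<And>k. k < length lams \<Longrightarrow> 1 \<le> lams ! k \<Longrightarrow> Q (0, 0) (Suc k, 1)"
    and along_leg: "\<And>k t. k < length lams \<Longrightarrow> 1 \<le> t \<Longrightarrow> t < lams ! k \<Longrightarrow>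
                      Q (Suc k, t) (Suc k, Suc t)"
  shows "Q u v"
proof -
  have "Q u v \<or> Q v u"
    using assms(1) center_leg[unfolded One_nat_def] along_leg[unfolded One_nat_def]
    unfolding spider_adj_def spider_vertices_def
    by (elim conjE disjE) (auto simp: le_Suc_eq)
  then show ?thesis using \<open>symp Q\<close> by (auto dest: sympD)
qed

lemma spider_path_along_leg:
  assumes "k < length lams" "1 \<le> n" "n \<le> lams ! k"
    and "(0, 0) \<in> C" "\<And>s. 1 \<le> s \<Longrightarrow> s \<le> n \<Longrightarrow> (Suc k, s) \<in> C"
  shows "(\<lambda>x y. spider_adj lams x y \<and> x \<in> C \<and> y \<in> C)\<^sup>*\<^sup>* (0, 0) (Suc k, n)"
  using assms(2-)
proof (induction n)
  case (Suc n)
  then show ?case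
    using assms(1) spider_adj_center_leg[of k lams] spider_adj_along_leg[of k lams n]
    by (cases "n = 0") (auto intro: rtranclp.rtrancl_into_rtrancl)
qed simp

definition leg_run :: "(nat \<times> nat) set \<Rightarrow> nat \<Rightarrow> nat \<Rightarrow> nat" where
  "leg_run C k n = (LEAST t. t = n \<or> (Suc k, Suc t) \<notin> C)"

lemma leg_run_le: "leg_run C k n \<le> n"
  unfolding leg_run_def by (rule Least_le) simp

lemma leg_run_mem:
  assumes "1 \<le> s" "s \<le> leg_run C k n"
  shows "(Suc k, s) \<in> C"
proof -
  have "s - 1 < leg_run C k n" using assms by simp
  then have "\<not> (s - 1 = n \<or> (Suc k, Suc (s - 1)) \<notin> C)"
    unfolding leg_run_def by (rule not_less_Least)
  then show ?thesis using assms(1) by simp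
qed

lemma leg_run_not_mem: "leg_run C k n < n \<Longrightarrow> (Suc k, Suc (leg_run C k n)) \<notin> C"
  using LeastI[of "\<lambda>t. t = n \<or> (Suc k, Suc t) \<notin> C" n] by (auto simp: leg_run_def)

lemma leg_run_pos: "(Suc k, 1) \<in> C \<Longrightarrow> 1 \<le> n \<Longrightarrow> 1 \<le> leg_run C k n"
  using leg_run_not_mem[of C k n] by (cases "leg_run C k n") auto

lemma leg_run_cut:
  assumes "partition_on A P" "B \<in> P" "C \<in> P" "1 \<le> leg_run C k n" "leg_run C k n < n"
    and "(Suc k, leg_run C k n) \<in> B"
  shows "(Suc k, Suc (leg_run C k n)) \<notin> B"
proof -
  have "B = C"
    using partition_on_block_eq[OF assms(1-3)] assms(6) leg_run_mem[OF assms(4) order_refl] by blast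
  then show ?thesis using leg_run_not_mem[OF assms(5)] by simp
qed

locale leg_merge =
  fixes lams :: "nat list" and i j a b :: nat
  assumes i: "i < length lams" and j: "j < length lams" and i_ne_j: "i \<noteq> j"
    and a: "a \<le> lams ! i" and b: "b \<le> lams ! j"
begin

definition other_legs :: "nat list" where
  "other_legs = filter (\<lambda>k. k \<noteq> i \<and> k \<noteq> j) [0..<length lams]"

abbreviation merged_leg :: nat where
  "merged_leg \<equiv> length other_legs"

lemma merge_legs_eq: "merge_legs lams i j = map ((!) lams) other_legs @ [lams ! i + lams ! j]"
proof -
  have "concat (map (\<lambda>k. if P k then [f k] else []) xs) = map f (filter P xs)"
    for P and f :: "nat \<Rightarrow> nat" and xs :: "nat list"
    by (induction xs) auto
  then show ?thesis by (simp add: merge_legs_def other_legs_def)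
qed

lemma length_merge_legs [simp]: "length (merge_legs lams i j) = Suc merged_leg"
  by (simp add: merge_legs_eq)

lemma nth_merge_legs [simp]:
  "p < Suc merged_leg \<Longrightarrow>
     merge_legs lams i j ! p = (if p = merged_leg then lams ! i + lams ! j else lams ! (other_legs ! p))"
  by (simp add: merge_legs_eq nth_append)

lemma set_other_legs: "set other_legs = {k. k < length lams \<and> k \<noteq> i \<and> k \<noteq> j}"
  by (auto simp: other_legs_def)

lemma nth_other_legs:
  assumes "p < merged_leg"
  shows "other_legs ! p < length lams" "other_legs ! p \<noteq> i" "other_legs ! p \<noteq> j"
  using nth_mem[OF assms] by (simp_all add: set_other_legs)

definition leg_index :: "nat \<Rightarrow> nat" where
  "leg_index = the_inv_into {..<merged_leg} ((!) other_legs)"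

lemma bij_betw_nth_other_legs: "bij_betw ((!) other_legs) {..<merged_leg} (set other_legs)"
  by (rule bij_betw_nth) (simp_all add: other_legs_def)

lemma leg_index_nth [simp]: "p < merged_leg \<Longrightarrow> leg_index (other_legs ! p) = p"
  using bij_betw_nth_other_legs unfolding leg_index_def
  by (simp add: bij_betw_def the_inv_into_f_f)

lemma leg_index_other_leg:
  assumes "k < length lams" "k \<noteq> i" "k \<noteq> j"
  shows "leg_index k < merged_leg" "other_legs ! leg_index k = k"
  using bij_betw_the_inv_into[OF bij_betw_nth_other_legs] assms
    f_the_inv_into_f_bij_betw[OF bij_betw_nth_other_legs]
  by (auto simp: leg_index_def set_other_legs bij_betw_def)

definition merge_map :: "nat \<times> nat \<Rightarrow> nat \<times> nat" where
  "merge_map x = (case x of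
     (0, _) \<Rightarrow> (0, 0)
   | (Suc k, t) \<Rightarrow>
       if k = i then (Suc merged_leg, if t \<le> a then t else t + b)
       else if k = j then (Suc merged_leg, if t \<le> b then a + t else lams ! i + t)
       else (Suc (leg_index k), t))"

definition unmerge_map :: "nat \<times> nat \<Rightarrow> nat \<times> nat" where
  "unmerge_map y = (case y of
     (0, _) \<Rightarrow> (0, 0)
   | (Suc p, t) \<Rightarrow>
       if p = merged_leg then
         (if t \<le> a then (Suc i, t)
          else if t \<le> a + b then (Suc j, t - a)
          else if t \<le> lams ! i + b then (Suc i, t - b)
          else (Suc j, t - lams ! i))
       else (Suc (other_legs ! p), t))"

lemma merge_map_simps [simp]:
  "merge_map (0, t) = (0, 0)"
  "merge_map (Suc i, t) = (Suc merged_leg, if t \<le> a then t else t + b)"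
  "merge_map (Suc j, t) = (Suc merged_leg, if t \<le> b then a + t else lams ! i + t)"
  "k \<noteq> i \<Longrightarrow> k \<noteq> j \<Longrightarrow> merge_map (Suc k, t) = (Suc (leg_index k), t)"
  using i_ne_j by (simp_all add: merge_map_def)

lemma spider_vertex_cases:
  assumes "x \<in> spider_vertices lams"
  obtains (center) "x = (0, 0)"
  | (leg_i) t where "x = (Suc i, t)" "1 \<le> t" "t \<le> lams ! i"
  | (leg_j) t where "x = (Suc j, t)" "1 \<le> t" "t \<le> lams ! j"
  | (other) k t where "x = (Suc k, t)" "k < length lams" "k \<noteq> i" "k \<noteq> j" "1 \<le> t" "t \<le> lams ! k"
  using assms by (cases x rule: prod.exhaust, rename_tac p t, case_tac p) auto

lemma merged_spider_vertex_cases: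
  assumes "y \<in> spider_vertices (merge_legs lams i j)"
  obtains (center) "y = (0, 0)"
  | (merged) t where "y = (Suc merged_leg, t)" "1 \<le> t" "t \<le> lams ! i + lams ! j"
  | (other) p t where "y = (Suc p, t)" "p < merged_leg" "1 \<le> t" "t \<le> lams ! (other_legs ! p)"
  using assms by (cases y rule: prod.exhaust, rename_tac p t, case_tac p) (auto simp: less_Suc_eq)

lemma bij_betw_merge_map:
  "bij_betw merge_map (spider_vertices lams) (spider_vertices (merge_legs lams i j))"
proof (rule bij_betw_byWitness[where f' = unmerge_map]; intro ballI subsetI; (elim imageE)?)
  fix x assume "x \<in> spider_vertices lams"
  then show "unmerge_map (merge_map x) = x"
    using a
    by (cases rule: spider_vertex_cases) (auto simp: unmerge_map_def dest: leg_index_other_leg)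
next
  fix y assume "y \<in> spider_vertices (merge_legs lams i j)"
  then show "merge_map (unmerge_map y) = y"
    using a b i_ne_j
    by (cases rule: merged_spider_vertex_cases) (auto simp: unmerge_map_def nth_other_legs)
next
  fix y x assume "y = merge_map x" and x: "x \<in> spider_vertices lams"
  from x show "y \<in> spider_vertices (merge_legs lams i j)"
    using \<open>y = merge_map x\<close> a b
    by (cases rule: spider_vertex_cases) (auto simp: leg_index_other_leg less_Suc_eq dest: leg_index_other_leg)
next
  fix x y assume "x = unmerge_map y" and y: "y \<in> spider_vertices (merge_legs lams i j)"
  from y show "x \<in> spider_vertices lams"
    using \<open>x = unmerge_map y\<close> i j a b
    by (cases rule: merged_spider_vertex_cases) (auto simp: unmerge_map_def nth_other_legs)
qed

lemma merge_map_along_leg: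
  assumes "k < length lams" "1 \<le> t" "t < lams ! k" "(k, t) \<noteq> (i, a)" "(k, t) \<noteq> (j, b)"
  shows "spider_adj (merge_legs lams i j) (merge_map (Suc k, t)) (merge_map (Suc k, Suc t))"
proof -
  have "merge_map (Suc k, t) \<in> spider_vertices (merge_legs lams i j)"
    and "merge_map (Suc k, Suc t) \<in> spider_vertices (merge_legs lams i j)"
    using assms by (auto intro: bij_betw_apply[OF bij_betw_merge_map])
  moreover have "fst (merge_map (Suc k, t)) = fst (merge_map (Suc k, Suc t))"
    and "fst (merge_map (Suc k, t)) \<noteq> 0"
    and "snd (merge_map (Suc k, Suc t)) = Suc (snd (merge_map (Suc k, t)))"
    using assms a b by (cases "k = i \<or> k = j"; auto)+
  ultimately show ?thesis by (simp add: spider_adj_def)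
qed

lemma merge_map_center_leg:
  assumes "k < length lams" "1 \<le> lams ! k" "k \<noteq> j" "k = i \<Longrightarrow> 1 \<le> a"
  shows "spider_adj (merge_legs lams i j) (0, 0) (merge_map (Suc k, 1))"
proof -
  have "merge_map (Suc k, 1) \<in> spider_vertices (merge_legs lams i j)"
    using assms by (auto intro: bij_betw_apply[OF bij_betw_merge_map])
  moreover have "snd (merge_map (Suc k, 1)) = 1"
    using assms by (cases "k = i") auto
  ultimately show ?thesis by (simp add: spider_adj_def)
qed

lemma merge_map_block_edge:
  assumes part: "partition_on (spider_vertices lams) P" and B0: "B0 \<in> P" "(0, 0) \<in> B0"
    and runs: "a = leg_run B0 i (lams ! i)" "b = leg_run B0 j (lams ! j)"
    and B: "B \<in> P" and edge: "spider_adj lams u v" "u \<in> B" "v \<in> B"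
  shows "(\<lambda>x y. spider_adj (merge_legs lams i j) x y \<and> x \<in> merge_map ` B \<and> y \<in> merge_map ` B)\<^sup>*\<^sup>*
           (merge_map u) (merge_map v)"
    (is "?R\<^sup>*\<^sup>* _ _")
proof -
  have "symp ?R\<^sup>*\<^sup>*"
    by (rule symp_rtranclp) (auto intro: sympI spider_adj_sym)
  then have "symp (\<lambda>u v. u \<in> B \<longrightarrow> v \<in> B \<longrightarrow> ?R\<^sup>*\<^sup>* (merge_map u) (merge_map v))"
    by (auto intro!: sympI dest: sympD)
  from edge(1) this have "u \<in> B \<longrightarrow> v \<in> B \<longrightarrow> ?R\<^sup>*\<^sup>* (merge_map u) (merge_map v)"
  proof (cases rule: spider_adj_symp_cases)
    case (center_leg k)
    show ?case
    proof (intro impI)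
      assume "(0, 0) \<in> B" "(Suc k, 1) \<in> B"
      then have "B = B0" "(Suc k, 1) \<in> B0"
        using partition_on_block_eq[OF part B B0(1)] B0(2) by auto
      show "?R\<^sup>*\<^sup>* (merge_map (0, 0)) (merge_map (Suc k, 1))"
      proof (cases "k = j")
        case True
        then have "1 \<le> b" using runs(2) leg_run_pos \<open>(Suc k, 1) \<in> B0\<close> center_leg by blast
        \<comment> \<open>this edge becomes the path through the images of the first \<open>a\<close> vertices of leg \<open>i\<close>\<close>
        have on_merged_leg: "(Suc merged_leg, s) \<in> merge_map ` B" if "1 \<le> s" "s \<le> Suc a" for s
        proof (cases "s \<le> a")
          case True
          then have "(Suc i, s) \<in> B"
            using leg_run_mem[of s B0 i] runs(1) that(1) \<open>B = B0\<close> by simp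
          then show ?thesis using True by (auto intro: rev_image_eqI)
        next
          case False
          then have "merge_map (Suc j, 1) = (Suc merged_leg, s)"
            using that \<open>1 \<le> b\<close> by simp
          then show ?thesis using \<open>(Suc k, 1) \<in> B\<close> \<open>k = j\<close> by (metis image_eqI)
        qed
        have "?R\<^sup>*\<^sup>* (0, 0) (Suc merged_leg, Suc a)"
          using a b \<open>1 \<le> b\<close> \<open>(0, 0) \<in> B\<close> on_merged_leg
          by (intro spider_path_along_leg) (auto intro: rev_image_eqI)
        then show ?thesis using \<open>k = j\<close> \<open>1 \<le> b\<close> by simp
      next
        case False
        then have "spider_adj (merge_legs lams i j) (0, 0) (merge_map (Suc k, 1))"
          using center_leg runs(1) leg_run_pos \<open>(Suc k, 1) \<in> B0\<close>
          by (intro merge_map_center_leg) auto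
        then show ?thesis using \<open>(0, 0) \<in> B\<close> \<open>(Suc k, 1) \<in> B\<close>
          by (intro r_into_rtranclp) (auto intro: rev_image_eqI)
      qed
    qed
  next
    case (along_leg k t)
    show ?case
    proof (intro impI)
      assume in_B: "(Suc k, t) \<in> B" "(Suc k, Suc t) \<in> B"
      \<comment> \<open>the two edges cut by \<open>merge_map\<close> leave \<open>B0\<close>, so they lie in no block\<close>
      have "(k, t) \<noteq> (i, a)" "(k, t) \<noteq> (j, b)"
        using leg_run_cut[OF part B B0(1), of k "lams ! k"] in_B along_leg runs by auto
      then have "spider_adj (merge_legs lams i j) (merge_map (Suc k, t)) (merge_map (Suc k, Suc t))"
        using along_leg by (intro merge_map_along_leg)
      then show "?R\<^sup>*\<^sup>* (merge_map (Suc k, t)) (merge_map (Suc k, Suc t))"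
        using in_B by (intro r_into_rtranclp) auto
    qed
  qed
  then show ?thesis using edge by blast
qed

end

lemma has_connected_partition_of_type_merge_legs:
  assumes P: "connected_partition (spider_vertices lams) (spider_adj lams) P"
    and "i < length lams" "j < length lams" "i \<noteq> j"
  shows "has_connected_partition_of_type (spider_vertices (merge_legs lams i j))
           (spider_adj (merge_legs lams i j)) (partition_type P)"
proof -
  have part: "partition_on (spider_vertices lams) P"
    using P by (simp add: connected_partition_def)
  obtain B0 where B0: "B0 \<in> P" "(0, 0) \<in> B0"
    using partition_onD1[OF part] spider_vertices_center[of 0 lams] by blast
  define a where "a = leg_run B0 i (lams ! i)"
  define b where "b = leg_run B0 j (lams ! j)"
  interpret leg_merge lams i j a b
    using assms by unfold_locales (simp_all add: a_def b_def leg_run_le)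
  show ?thesis
    using connected_partition_bij_image[OF P bij_betw_merge_map
        merge_map_block_edge[OF part B0 a_def b_def]]
    unfolding has_connected_partition_of_type_def by blast
qed

theorem proposition6p1:
  fixes lams :: "nat list" and i j :: nat and \<mu> :: "nat multiset"
  assumes "length lams \<ge> 2"
    and "\<forall>k < length lams. lams ! k > 0"
    and "i < length lams" and "j < length lams" and "i \<noteq> j"
    and "has_connected_partition_of_type (spider_vertices lams) (spider_adj lams) \<mu>"
  shows "has_connected_partition_of_type (spider_vertices (merge_legs lams i j))
           (spider_adj (merge_legs lams i j)) \<mu>"
proof -
  obtain P where "connected_partition (spider_vertices lams) (spider_adj lams) P"
    and "partition_type P = \<mu>"
    using assms(6) by (auto simp: has_connected_partition_of_type_def)
  then show ?thesis
    using has_connected_partition_of_type_merge_legs assms(3-5) by blast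
qed

end
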